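(* For all computation predicates $b,c\subseteq\Sigma^+$ and every state predicate $o\subseteq\Sigma$: $(b*c)\cap\mathrm{past}(o)=(b\cap\mathrm{past}(o))*c$.
   Context: $(\Sigma,*,\mathsf{emp})$ is a separation algebra (partial commutative monoid with a set of units such that each state has a unit with $s*1=s$ and distinct units do not compose). Computations $\Sigma^+$ (nonempty finite sequences of states) form a separation algebra with $\sigma.s*\tau.t$ defined iff $\sigma=\tau$ and $s*t$ is defined, equal to $\sigma.(s*t)$. For sets of computations, $b*c=\{x*y\mid x\in b,y\in c,x*y\text{ defined}\}$. For a state predicate $o$, $\mathrm{past}(o)=\Sigma^*.o.\Sigma^+$, the computations containing a state in $o$ strictly before their last state. *)

theory Defs
  imports Main
begin

definition sep_alg :: "('a \<Rightarrow> 'a \<Rightarrow> 'a option) \<Rightarrow> 'a set \<Rightarrow> bool" where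
  "sep_alg op U \<longleftrightarrow>
     (\<forall>a b. op a b = op b a) \<and>
     (\<forall>a b c. Option.bind (op a b) (\<lambda>ab. op ab c) = Option.bind (op b c) (\<lambda>bc. op a bc)) \<and>
     (\<forall>s. \<exists>u\<in>U. op s u = Some s) \<and>
     (\<forall>u1\<in>U. \<forall>u2\<in>U. u1 \<noteq> u2 \<longrightarrow> op u1 u2 = None)"

text \<open>Computations: nonempty lists of states. sigma.s * tau.t is defined iff
  sigma = tau and s*t is defined; then it is sigma.(s*t).\<close>

definition comp_op :: "('a \<Rightarrow> 'a \<Rightarrow> 'a option) \<Rightarrow> 'a list \<Rightarrow> 'a list \<Rightarrow> 'a list option" where
  "comp_op op x y =
     (if x \<noteq> [] \<and> y \<noteq> [] \<and> butlast x = butlast y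
      then map_option (\<lambda>r. butlast x @ [r]) (op (last x) (last y))
      else None)"

definition comp_star :: "('a \<Rightarrow> 'a \<Rightarrow> 'a option) \<Rightarrow> 'a list set \<Rightarrow> 'a list set \<Rightarrow> 'a list set" where
  "comp_star op b c = {z. \<exists>x\<in>b. \<exists>y\<in>c. comp_op op x y = Some z}"

definition past :: "'a set \<Rightarrow> 'a list set" where
  "past P = {xs @ [s] @ ys | xs s ys. s \<in> P \<and> ys \<noteq> []}"

end

theory Submission
  imports Defs
begin

text \<open>A product of computations keeps the history of its left factor, butlast (x * y) = butlast x,
  while membership in past(o) only depends on the history before the last state. Hence
  intersecting a product with past(o) is the same as intersecting its left factor.\<close>

lemma comp_op_butlast: "comp_op op x y = Some z \<Longrightarrow> butlast z = butlast x"
  unfolding comp_op_def by (auto split: if_splits)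

lemma comp_star_Int_butlast_invariant:
  assumes "\<And>x y. butlast x = butlast y \<Longrightarrow> x \<in> Q \<longleftrightarrow> y \<in> Q"
  shows "comp_star op b c \<inter> Q = comp_star op (b \<inter> Q) c"
  unfolding comp_star_def using assms comp_op_butlast by blast

lemma mem_past_iff: "zs \<in> past P \<longleftrightarrow> (\<exists>s\<in>P. s \<in> set (butlast zs))"
proof
  assume "zs \<in> past P"
  then obtain xs s ys where "zs = xs @ [s] @ ys" "s \<in> P" "ys \<noteq> []"
    unfolding past_def by blast
  then show "\<exists>s\<in>P. s \<in> set (butlast zs)" by (auto simp: butlast_append)
next
  assume "\<exists>s\<in>P. s \<in> set (butlast zs)"
  then obtain s where s: "s \<in> P" "s \<in> set (butlast zs)" by blast
  then obtain as bs where "butlast zs = as @ s # bs" by (metis split_list)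
  moreover have "zs \<noteq> []" using s by auto
  ultimately have "zs = as @ [s] @ (bs @ [last zs])"
    by (metis append.assoc append_Cons append_butlast_last_id self_append_conv2)
  then show "zs \<in> past P" using s unfolding past_def by blast
qed

lemma past_butlast_invariant: "butlast x = butlast y \<Longrightarrow> x \<in> past P \<longleftrightarrow> y \<in> past P"
  by (simp add: mem_past_iff)

theorem lemma4p5:
  fixes op :: "'a \<Rightarrow> 'a \<Rightarrow> 'a option" and U :: "'a set"
    and b c :: "'a list set" and P :: "'a set"
  assumes "sep_alg op U"
    and "b \<subseteq> {x. x \<noteq> []}" and "c \<subseteq> {x. x \<noteq> []}"
  shows "comp_star op b c \<inter> past P = comp_star op (b \<inter> past P) c"
  using past_butlast_invariant by (rule comp_star_Int_butlast_invariant)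

end
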